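(* Let $f\in\mathbb{Z}[t]$ be irreducible, and let $\alpha$ be a root of $f$ lying in its splitting field. Suppose that $f(t)=g(h(t))-t$ with $g,h\in\mathbb{Z}[t]$ both of degree exceeding $1$. Then $f(g(t))$ is divisible by the minimal polynomial of $h(\alpha)$ over $\mathbb{Q}$, and hence $f$ admits polysmoothness $1-1/\deg(g)$.
   Context: A polynomial $f\in\mathbb{Z}[t]$ of positive degree admits polysmoothness $\theta$ (for a real $\theta\ge 0$) if there exists a non-constant polynomial $g\in\mathbb{Z}[t]$ such that every irreducible factor of $f(g(t))$ has degree at most $\theta\,(\deg f)(\deg g)$. *)

theory Defs
  imports Complex_Main "HOL-Computational_Algebra.Polynomial" "HOL-Computational_Algebra.Polynomial_Factorial"
begin

definition is_min_poly_rat :: "complex \<Rightarrow> rat poly \<Rightarrow> bool" where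
  "is_min_poly_rat x p \<longleftrightarrow>
     lead_coeff p = 1 \<and> poly (map_poly of_rat p) x = 0 \<and>
     (\<forall>q. q \<noteq> 0 \<and> poly (map_poly of_rat q) x = 0 \<longrightarrow> degree p \<le> degree q)"

definition min_poly_rat :: "complex \<Rightarrow> rat poly" where
  "min_poly_rat x = (THE p. is_min_poly_rat x p)"

definition admits_polysmoothness :: "int poly \<Rightarrow> real \<Rightarrow> bool" where
  "admits_polysmoothness f \<theta> \<longleftrightarrow>
     degree f > 0 \<and> \<theta> \<ge> 0 \<and>
     (\<exists>g :: int poly. degree g > 0 \<and>
        (\<forall>p :: int poly. irreducible p \<and> p dvd pcompose f g \<longrightarrow>
            real (degree p) \<le> \<theta> * real (degree f) * real (degree g)))"

end

theory Submission
  imports Defs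
begin

text \<open>Put \<open>\<beta> = h(\<alpha>)\<close>. Since \<open>g(h(\<alpha>)) = \<alpha>\<close>, we get \<open>f(g(\<beta>)) = g(h(g(\<beta>))) - g(\<beta>) =
  g(h(\<alpha>)) - \<alpha> = 0\<close>, so the minimal polynomial of \<open>\<beta>\<close> divides \<open>f \<circ> g\<close>. For the smoothness,
  \<open>f \<circ> g = g \<circ> (h \<circ> g) - g \<circ> t\<close> is divisible by \<open>h \<circ> g - t\<close>, because \<open>a - b\<close> divides
  \<open>g(a) - g(b)\<close>. With \<open>n = deg f\<close> and \<open>d = deg g \<ge> 2\<close> this splits \<open>f \<circ> g\<close> into factors of
  degrees \<open>n\<close> and \<open>n d - n \<ge> n\<close>, so every irreducible factor has degree at most
  \<open>n d - n = (1 - 1/d) n d\<close>.\<close>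

lemma map_poly_of_int_add:
  "map_poly (of_int :: int \<Rightarrow> 'a::comm_ring_1) (p + q) = map_poly of_int p + map_poly of_int q"
  by (intro poly_eqI) (simp add: coeff_map_poly)

lemma map_poly_of_int_diff:
  "map_poly (of_int :: int \<Rightarrow> 'a::comm_ring_1) (p - q) = map_poly of_int p - map_poly of_int q"
  by (intro poly_eqI) (simp add: coeff_map_poly)

lemma map_poly_of_int_mult:
  "map_poly (of_int :: int \<Rightarrow> 'a::comm_ring_1) (p * q) = map_poly of_int p * map_poly of_int q"
  by (intro poly_eqI) (simp add: coeff_map_poly coeff_mult)

lemma map_poly_of_rat_diff:
  "map_poly (of_rat :: rat \<Rightarrow> 'a::field_char_0) (p - q) = map_poly of_rat p - map_poly of_rat q"
  by (intro poly_eqI) (simp add: coeff_map_poly of_rat_diff)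

lemma map_poly_of_rat_mult:
  "map_poly (of_rat :: rat \<Rightarrow> 'a::field_char_0) (p * q) = map_poly of_rat p * map_poly of_rat q"
  by (intro poly_eqI) (simp add: coeff_map_poly coeff_mult of_rat_sum of_rat_mult)

lemma map_poly_of_rat_of_int:
  "map_poly (of_rat :: rat \<Rightarrow> 'a::field_char_0) (map_poly of_int p) = map_poly of_int p"
  by (simp add: map_poly_map_poly o_def)

lemma poly_map_poly_of_int_pcompose:
  "poly (map_poly (of_int :: int \<Rightarrow> 'a::comm_ring_1) (pcompose p q)) x
     = poly (map_poly of_int p) (poly (map_poly of_int q) x)"
  by (induction p)
    (simp_all add: pcompose_pCons map_poly_of_int_add map_poly_of_int_mult map_poly_pCons)

lemma dvd_pcompose_diff:
  fixes a b :: "'a::comm_ring_1 poly"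
  shows "a - b dvd pcompose p a - pcompose p b"
proof (induction p)
  case 0
  then show ?case by simp
next
  case (pCons c p)
  have "pcompose (pCons c p) a - pcompose (pCons c p) b
      = a * (pcompose p a - pcompose p b) + (a - b) * pcompose p b"
    by (simp add: pcompose_pCons algebra_simps)
  then show ?case using pCons.IH by simp
qed

lemma degree_diff_X:
  fixes p :: "'a::comm_ring_1 poly"
  assumes "degree p > 1"
  shows "degree (p - [:0, 1:]) = degree p"
  using assms by (subst diff_conv_add_uminus, intro degree_add_eq_left) simp

lemma degree_pcompose_diff_X:
  fixes p q :: "'a::idom poly"
  assumes "degree p > 1" and "degree q > 1"
  shows "degree (pcompose p q - [:0, 1:]) = degree p * degree q"
  using assms by (simp add: degree_diff_X degree_pcompose one_less_mult)

lemma pcompose_diff_X_dvd: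
  fixes g h :: "'a::comm_ring_1 poly"
  shows "pcompose h g - [:0, 1:] dvd pcompose (pcompose g h - [:0, 1:]) g"
proof -
  have "pcompose (pcompose g h - [:0, 1:]) g = pcompose g (pcompose h g) - pcompose g [:0, 1:]"
    by (simp add: pcompose_diff pcompose_assoc pcompose_pCons)
  then show ?thesis by (metis dvd_pcompose_diff)
qed

lemma is_min_poly_rat_nonzero: "is_min_poly_rat x p \<Longrightarrow> p \<noteq> 0"
  by (auto simp: is_min_poly_rat_def)

lemma is_min_poly_rat_dvd:
  assumes p: "is_min_poly_rat x p" and q: "poly (map_poly of_rat q) x = 0"
  shows "p dvd q"
proof -
  have "q mod p = q - p * (q div p)" by (simp add: minus_mult_div_eq_mod)
  then have r: "poly (map_poly of_rat (q mod p)) x = 0"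
    using p q by (simp add: map_poly_of_rat_diff map_poly_of_rat_mult is_min_poly_rat_def)
  have "q mod p = 0"
  proof (rule ccontr)
    assume "q mod p \<noteq> 0"
    with p r have "degree p \<le> degree (q mod p)" by (auto simp: is_min_poly_rat_def)
    moreover have "degree (q mod p) < degree p"
      using is_min_poly_rat_nonzero[OF p] \<open>q mod p \<noteq> 0\<close> by (rule degree_mod_less')
    ultimately show False by simp
  qed
  then show ?thesis by (simp add: dvd_eq_mod_eq_0)
qed

lemma is_min_poly_rat_unique:
  assumes p: "is_min_poly_rat x p" and q: "is_min_poly_rat x q"
  shows "p = q"
proof -
  obtain c where c: "q = p * c"
    using is_min_poly_rat_dvd[OF p, of q] q unfolding is_min_poly_rat_def by auto
  have "c \<noteq> 0" using c is_min_poly_rat_nonzero[OF q] by auto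
  have "degree q \<le> degree p"
    using p q is_min_poly_rat_nonzero[OF p] by (auto simp: is_min_poly_rat_def)
  with c \<open>c \<noteq> 0\<close> is_min_poly_rat_nonzero[OF p] have "degree c = 0"
    by (simp add: degree_mult_eq)
  moreover have "lead_coeff c = 1"
    using c p q by (simp add: lead_coeff_mult is_min_poly_rat_def)
  ultimately have "c = 1" by (metis degree_eq_zeroE lead_coeff_pCons(2) one_pCons)
  with c show ?thesis by simp
qed

lemma ex_is_min_poly_rat:
  assumes "q \<noteq> 0" and "poly (map_poly of_rat q) x = 0"
  shows "\<exists>p. is_min_poly_rat x p"
proof -
  obtain p where p: "p \<noteq> 0" "poly (map_poly of_rat p) x = 0"
    and least: "\<And>r. r \<noteq> 0 \<Longrightarrow> poly (map_poly of_rat r) x = 0 \<Longrightarrow> degree p \<le> degree r"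
    using ex_has_least_nat[of "\<lambda>p. p \<noteq> 0 \<and> poly (map_poly of_rat p) x = 0" q degree] assms
    by blast
  define m where "m = smult (inverse (lead_coeff p)) p"
  have "map_poly (of_rat :: rat \<Rightarrow> complex) m
          = smult (of_rat (inverse (lead_coeff p))) (map_poly of_rat p)"
    unfolding m_def by (rule map_poly_smult) (simp_all add: of_rat_mult)
  then have "is_min_poly_rat x m"
    using p least by (simp add: is_min_poly_rat_def m_def)
  then show ?thesis ..
qed

lemma min_poly_rat_dvd:
  assumes "q \<noteq> 0" and "poly (map_poly of_rat q) x = 0"
  shows "min_poly_rat x dvd q"
proof -
  obtain p where p: "is_min_poly_rat x p" using ex_is_min_poly_rat[OF assms] ..
  then have "min_poly_rat x = p"
    unfolding min_poly_rat_def by (blast intro: is_min_poly_rat_unique)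
  with p assms(2) show ?thesis by (simp add: is_min_poly_rat_dvd)
qed

lemma degree_prime_factor_le:
  fixes p a b :: "'a::idom poly"
  assumes "prime_elem p" and "p dvd a * b" and "a * b \<noteq> 0"
  shows "degree p \<le> max (degree a) (degree b)"
proof -
  from assms(1,2) have "p dvd a \<or> p dvd b" by (simp add: prime_elem_dvd_mult_iff)
  with assms(3) show ?thesis by (auto dest: dvd_imp_degree_le)
qed

lemma admits_polysmoothnessI:
  fixes f g a b :: "int poly"
  assumes "degree f > 0" and "degree g > 0" and "\<theta> \<ge> 0"
    and factor: "pcompose f g = a * b"
    and "real (max (degree a) (degree b)) \<le> \<theta> * real (degree f) * real (degree g)"
  shows "admits_polysmoothness f \<theta>"
proof -
  have "pcompose f g \<noteq> 0"
    using assms(1,2) by (metis degree_0 degree_pcompose mult_is_0 neq0_conv)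
  then have "degree p \<le> max (degree a) (degree b)"
    if "irreducible p" and "p dvd pcompose f g" for p
    using that factor by (intro degree_prime_factor_le) (simp_all add: prime_elem_iff_irreducible)
  with assms show ?thesis
    unfolding admits_polysmoothness_def by (meson of_nat_le_iff order.trans)
qed

theorem corollary1p4:
  fixes f g h :: "int poly" and \<alpha> :: complex
  assumes "irreducible f"
    and "poly (map_poly of_int f) \<alpha> = 0"
    and "f = pcompose g h - [:0, 1:]"
    and "degree g > 1" and "degree h > 1"
  shows "min_poly_rat (poly (map_poly of_int h) \<alpha>)
           dvd map_poly of_int (pcompose f g)
       \<and> admits_polysmoothness f (1 - 1 / real (degree g))"
proof
  define \<beta> where "\<beta> = poly (map_poly of_int h) \<alpha>"
  have "poly (map_poly of_int g) \<beta> = \<alpha>"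
    using assms(2,3)
    by (simp add: \<beta>_def map_poly_of_int_diff poly_map_poly_of_int_pcompose map_poly_pCons)
  then have root: "poly (map_poly of_rat (map_poly of_int (pcompose f g))) \<beta> = 0"
    using assms(2) by (simp add: map_poly_of_rat_of_int poly_map_poly_of_int_pcompose)
  have deg_f: "degree f = degree g * degree h"
    using assms(3-5) by (simp add: degree_pcompose_diff_X)
  with assms(4,5) have "degree (pcompose f g) > 0" by (simp add: degree_pcompose)
  with root show "min_poly_rat (poly (map_poly of_int h) \<alpha>) dvd map_poly of_int (pcompose f g)"
    unfolding \<beta>_def by (intro min_poly_rat_dvd) (auto simp: map_poly_eq_0_iff)

  define a where "a = pcompose h g - [:0, 1:]"
  have "a dvd pcompose f g" unfolding a_def assms(3) by (rule pcompose_diff_X_dvd)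
  then obtain b where b: "pcompose f g = a * b" ..
  have deg_a: "degree a = degree f"
    using assms(4,5) deg_f by (simp add: a_def degree_pcompose_diff_X)
  from b \<open>degree (pcompose f g) > 0\<close> have "a \<noteq> 0" "b \<noteq> 0" by auto
  with b deg_a have "degree f * degree g = degree f + degree b"
    using degree_pcompose[of f g] by (simp add: degree_mult_eq)
  moreover have "degree f * 2 \<le> degree f * degree g" using assms(4) by simp
  ultimately have bound: "real (max (degree a) (degree b))
      = (1 - 1 / real (degree g)) * real (degree f) * real (degree g)"
    using deg_a assms(4) by (simp add: field_simps flip: of_nat_add of_nat_mult)
  show "admits_polysmoothness f (1 - 1 / real (degree g))"
    using deg_f assms(4,5) by (intro admits_polysmoothnessI[OF _ _ _ b eq_refl[OF bound]]) simp_all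
qed

end
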